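(* Let $(V,g)$ be a real vector space of dimension $n\ge3$ with non-degenerate scalar product $g$. Let $R\in\mathfrak{r}(V)$ be orthogonal to $\mathfrak{a}(V)\oplus\mathfrak{s}(V)$ and suppose $Ric(R)\neq0$. Then $Ric(R)$ is skew-symmetric and $3\,Ric(R)=Ric^*(R)$.
   Context: $\mathfrak{r}(V)$ is the space of $(0,4)$-tensors $R$ with $R(x,y,z,w)=-R(y,x,z,w)$ and $R(x,y,z,w)+R(y,z,x,w)+R(z,x,y,w)=0$; $\mathfrak{a}(V)$, resp. $\mathfrak{s}(V)$, is the subspace of those $R\in\mathfrak{r}(V)$ that are skew-symmetric, resp. symmetric, in the last two arguments. Orthogonality is with respect to the inner product on $(0,4)$-tensors induced by $g$, $\langle R,S\rangle=g^{ia}g^{jb}g^{kc}g^{ld}R_{ijkl}S_{abcd}$. $R^*(x,y,z,w):=-R(x,y,w,z)$, $Ric(R)(x,y):=g^{ij}R(e_i,x,y,e_j)$, $Ric^*(R):=Ric(R^* )$, where $(g^{ij})$ is the inverse of $g_{ij}=g(e_i,e_j)$ for a basis $\{e_i\}$. *)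

theory Defs
  imports "HOL-Analysis.Analysis"
begin

text \<open>V is modelled as real ^ 'n with its standard basis e_i (index type 'n, dim = CARD('n)).
  A (0,4)-tensor is given by its components R i j k l = R(e_i,e_j,e_k,e_l);
  a (0,2)-tensor by components. The scalar product g is given by its Gram matrix
  g $ i $ j = g(e_i,e_j), symmetric and invertible (non-degenerate, any signature).\<close>

type_synonym 'n tensor4 = "'n \<Rightarrow> 'n \<Rightarrow> 'n \<Rightarrow> 'n \<Rightarrow> real"
type_synonym 'n tensor2 = "'n \<Rightarrow> 'n \<Rightarrow> real"

definition nondeg_scalar_product :: "real^'n^'n \<Rightarrow> bool" where
  "nondeg_scalar_product g \<longleftrightarrow> transpose g = g \<and> invertible g"

definition ginv :: "real^'n^'n \<Rightarrow> real^'n^'n" where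
  "ginv g = matrix_inv g"

definition curv_r :: "('n::finite) tensor4 set" where
  "curv_r = {R. (\<forall>x y z w. R x y z w = - R y x z w) \<and>
                (\<forall>x y z w. R x y z w + R y z x w + R z x y w = 0)}"

definition curv_a :: "('n::finite) tensor4 set" where
  "curv_a = {R \<in> curv_r. \<forall>x y z w. R x y z w = - R x y w z}"

definition curv_s :: "('n::finite) tensor4 set" where
  "curv_s = {R \<in> curv_r. \<forall>x y z w. R x y z w = R x y w z}"

definition inner4 :: "real^'n^'n \<Rightarrow> ('n::finite) tensor4 \<Rightarrow> 'n tensor4 \<Rightarrow> real" where
  "inner4 g R S = (\<Sum>i\<in>UNIV. \<Sum>j\<in>UNIV. \<Sum>k\<in>UNIV. \<Sum>l\<in>UNIV.
     \<Sum>a\<in>UNIV. \<Sum>b\<in>UNIV. \<Sum>c\<in>UNIV. \<Sum>d\<in>UNIV.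
       ginv g $ i $ a * ginv g $ j $ b * ginv g $ k $ c * ginv g $ l $ d
       * R i j k l * S a b c d)"

definition star4 :: "'n tensor4 \<Rightarrow> 'n tensor4" where
  "star4 R = (\<lambda>x y z w. - R x y w z)"

definition Ric :: "real^'n^'n \<Rightarrow> ('n::finite) tensor4 \<Rightarrow> 'n tensor2" where
  "Ric g R = (\<lambda>x y. \<Sum>i\<in>UNIV. \<Sum>j\<in>UNIV. ginv g $ i $ j * R i x y j)"

definition RicStar :: "real^'n^'n \<Rightarrow> ('n::finite) tensor4 \<Rightarrow> 'n tensor2" where
  "RicStar g R = Ric g (star4 R)"

end

theory Submission
  imports Defs "HOL-Library.Function_Algebras"
begin

text \<open>Orthogonality to \<open>\<aa>(V) \<oplus> \<ss>(V)\<close> says that the pairing of \<open>R\<close> with every tensor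
  of \<open>\<aa>(V)\<close> and of \<open>\<ss>(V)\<close> vanishes once the indices of the latter are raised with
  \<open>g\<^sup>-\<^sup>1\<close>. Raising all four indices commutes with permutations of the slots, so it maps
  \<open>\<aa>(V)\<close> and \<open>\<ss>(V)\<close> bijectively onto themselves, and hence \<open>R\<close> is also orthogonal to
  \<open>\<aa>(V)\<close> and \<open>\<ss>(V)\<close> for the plain Euclidean pairing of components. Testing this against two
  explicit tensors built from \<open>g\<^sup>-\<^sup>1\<close> and a pair of basis indices \<open>x, y\<close>, one in \<open>\<ss>(V)\<close>
  and one in \<open>\<aa>(V)\<close>, gives
  \<open>4 Ric(x,y) - 2 Ric(y,x) - 2 Ric\<^sup>*(x,y) = 0\<close> and
  \<open>Ric(x,y) + Ric(y,x) + Ric\<^sup>*(x,y) + Ric\<^sup>*(y,x) = 0\<close>,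
  and these linear relations force skew-symmetry and \<open>3 Ric = Ric\<^sup>*\<close>.\<close>

definition slot1 :: "real^'n^'n \<Rightarrow> ('n::finite) tensor4 \<Rightarrow> 'n tensor4" where
  "slot1 A T = (\<lambda>a b c d. \<Sum>p\<in>UNIV. A$a$p * T p b c d)"
definition slot2 :: "real^'n^'n \<Rightarrow> ('n::finite) tensor4 \<Rightarrow> 'n tensor4" where
  "slot2 A T = (\<lambda>a b c d. \<Sum>p\<in>UNIV. A$b$p * T a p c d)"
definition slot3 :: "real^'n^'n \<Rightarrow> ('n::finite) tensor4 \<Rightarrow> 'n tensor4" where
  "slot3 A T = (\<lambda>a b c d. \<Sum>p\<in>UNIV. A$c$p * T a b p d)"
definition slot4 :: "real^'n^'n \<Rightarrow> ('n::finite) tensor4 \<Rightarrow> 'n tensor4" where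
  "slot4 A T = (\<lambda>a b c d. \<Sum>p\<in>UNIV. A$d$p * T a b c p)"

lemmas slot_defs = slot1_def slot2_def slot3_def slot4_def

lemma slot_commute:
  "slot2 B (slot1 A T) = slot1 A (slot2 B T)"
  "slot3 B (slot1 A T) = slot1 A (slot3 B T)"
  "slot4 B (slot1 A T) = slot1 A (slot4 B T)"
  "slot3 B (slot2 A T) = slot2 A (slot3 B T)"
  "slot4 B (slot2 A T) = slot2 A (slot4 B T)"
  "slot4 B (slot3 A T) = slot3 A (slot4 B T)"
  by (auto simp: slot_defs fun_eq_iff sum_distrib_left mult_ac intro: sum.swap)

lemma slot_matrix_mult:
  "slot1 A (slot1 B T) = slot1 (A ** B) T"
  "slot2 A (slot2 B T) = slot2 (A ** B) T"
  "slot3 A (slot3 B T) = slot3 (A ** B) T"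
  "slot4 A (slot4 B T) = slot4 (A ** B) T"
  by (auto simp: slot_defs matrix_matrix_mult_def fun_eq_iff sum_distrib_left
      sum_distrib_right mult_ac intro: sum.swap)

lemma slot_mat_1:
  "slot1 (mat 1) T = T" "slot2 (mat 1) T = T" "slot3 (mat 1) T = T" "slot4 (mat 1) T = T"
  by (simp_all add: slot_defs mat_def mult_if_delta fun_eq_iff)

definition transform4 :: "real^'n^'n \<Rightarrow> ('n::finite) tensor4 \<Rightarrow> 'n tensor4" where
  "transform4 A T = slot1 A (slot2 A (slot3 A (slot4 A T)))"

lemma transform4_matrix_mult: "transform4 A (transform4 B T) = transform4 (A ** B) T"
  by (simp add: transform4_def slot_commute slot_matrix_mult)

lemma transform4_mat_1: "transform4 (mat 1) T = T"
  by (simp add: transform4_def slot_mat_1)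

lemma slot_add:
  "slot1 A (S + T) = slot1 A S + slot1 A T" "slot2 A (S + T) = slot2 A S + slot2 A T"
  "slot3 A (S + T) = slot3 A S + slot3 A T" "slot4 A (S + T) = slot4 A S + slot4 A T"
  by (simp_all add: slot_defs fun_eq_iff distrib_left sum.distrib)

lemma slot_uminus:
  "slot1 A (- T) = - slot1 A T" "slot2 A (- T) = - slot2 A T"
  "slot3 A (- T) = - slot3 A T" "slot4 A (- T) = - slot4 A T"
  by (simp_all add: slot_defs fun_eq_iff sum_negf)

lemma slot_zero: "slot1 A 0 = 0" "slot2 A 0 = 0" "slot3 A 0 = 0" "slot4 A 0 = 0"
  by (simp_all add: slot_defs fun_eq_iff)

lemma transform4_add: "transform4 A (S + T) = transform4 A S + transform4 A T"
  by (simp add: transform4_def slot_add)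

lemma transform4_uminus: "transform4 A (- T) = - transform4 A T"
  by (simp add: transform4_def slot_uminus)

lemma transform4_zero: "transform4 A 0 = 0"
  by (simp add: transform4_def slot_zero)

definition swap12 :: "'n tensor4 \<Rightarrow> 'n tensor4" where
  "swap12 T = (\<lambda>a b c d. T b a c d)"
definition swap34 :: "'n tensor4 \<Rightarrow> 'n tensor4" where
  "swap34 T = (\<lambda>a b c d. T a b d c)"
definition cycle123 :: "'n tensor4 \<Rightarrow> 'n tensor4" where
  "cycle123 T = (\<lambda>a b c d. T b c a d)"

lemma slot_swap12:
  "slot1 A (swap12 T) = swap12 (slot2 A T)" "slot2 A (swap12 T) = swap12 (slot1 A T)"
  "slot3 A (swap12 T) = swap12 (slot3 A T)" "slot4 A (swap12 T) = swap12 (slot4 A T)"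
  by (simp_all add: slot_defs swap12_def)

lemma slot_swap34:
  "slot1 A (swap34 T) = swap34 (slot1 A T)" "slot2 A (swap34 T) = swap34 (slot2 A T)"
  "slot3 A (swap34 T) = swap34 (slot4 A T)" "slot4 A (swap34 T) = swap34 (slot3 A T)"
  by (simp_all add: slot_defs swap34_def)

lemma slot_cycle123:
  "slot1 A (cycle123 T) = cycle123 (slot3 A T)" "slot2 A (cycle123 T) = cycle123 (slot1 A T)"
  "slot3 A (cycle123 T) = cycle123 (slot2 A T)" "slot4 A (cycle123 T) = cycle123 (slot4 A T)"
  by (simp_all add: slot_defs cycle123_def)

lemma transform4_swap12: "transform4 A (swap12 T) = swap12 (transform4 A T)"
  by (simp add: transform4_def slot_swap12 slot_commute)

lemma transform4_swap34: "transform4 A (swap34 T) = swap34 (transform4 A T)"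
  by (simp add: transform4_def slot_swap34 slot_commute)

lemma transform4_cycle123: "transform4 A (cycle123 T) = cycle123 (transform4 A T)"
  by (simp add: transform4_def slot_cycle123 slot_commute)

lemma curv_r_iff: "R \<in> curv_r \<longleftrightarrow> R = - swap12 R \<and> R + cycle123 R + cycle123 (cycle123 R) = 0"
  by (simp add: curv_r_def swap12_def cycle123_def fun_eq_iff)

lemma curv_r_swap12: "R \<in> curv_r \<Longrightarrow> swap12 R = - R"
  by (metis curv_r_iff minus_minus)

lemma curv_a_iff: "R \<in> curv_a \<longleftrightarrow> R \<in> curv_r \<and> R = - swap34 R"
  by (simp add: curv_a_def swap34_def fun_eq_iff)

lemma curv_s_iff: "R \<in> curv_s \<longleftrightarrow> R \<in> curv_r \<and> R = swap34 R"
  by (simp add: curv_s_def swap34_def fun_eq_iff)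

lemma transform4_curv_r:
  assumes "R \<in> curv_r"
  shows "transform4 A R \<in> curv_r"
proof -
  have skew: "R = - swap12 R" and bianchi: "R + cycle123 R + cycle123 (cycle123 R) = 0"
    using assms by (simp_all add: curv_r_iff)
  have "transform4 A R = - swap12 (transform4 A R)"
    by (subst skew) (simp only: transform4_uminus transform4_swap12)
  moreover have "transform4 A R + cycle123 (transform4 A R) + cycle123 (cycle123 (transform4 A R)) = 0"
    using arg_cong[OF bianchi, of "transform4 A"]
    by (simp only: transform4_add transform4_cycle123 transform4_zero)
  ultimately show ?thesis
    by (simp only: curv_r_iff)
qed

lemma transform4_curv_a:
  assumes "R \<in> curv_a"
  shows "transform4 A R \<in> curv_a"
proof -
  have "R \<in> curv_r" and skew: "R = - swap34 R"
    using assms by (simp_all add: curv_a_iff)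
  moreover have "transform4 A R = - swap34 (transform4 A R)"
    by (subst skew) (simp only: transform4_uminus transform4_swap34)
  ultimately show ?thesis
    by (simp add: curv_a_iff transform4_curv_r)
qed

lemma transform4_curv_s:
  assumes "R \<in> curv_s"
  shows "transform4 A R \<in> curv_s"
proof -
  have "R \<in> curv_r" and sym: "R = swap34 R"
    using assms by (simp_all add: curv_s_iff)
  moreover have "transform4 A R = swap34 (transform4 A R)"
    by (subst sym) (simp only: transform4_swap34)
  ultimately show ?thesis
    by (simp add: curv_s_iff transform4_curv_r)
qed

definition pair4 :: "('n::finite) tensor4 \<Rightarrow> 'n tensor4 \<Rightarrow> real" where
  "pair4 R U = (\<Sum>i\<in>UNIV. \<Sum>j\<in>UNIV. \<Sum>k\<in>UNIV. \<Sum>l\<in>UNIV. R i j k l * U i j k l)"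

lemma inner4_eq_pair4_transform4: "inner4 g R T = pair4 R (transform4 (ginv g) T)"
  by (simp add: inner4_def pair4_def transform4_def slot_defs sum_distrib_left mult_ac)

lemma ginv_mult:
  assumes "invertible g"
  shows "g ** ginv g = mat 1 \<and> ginv g ** g = mat 1"
  using assms unfolding ginv_def matrix_inv_def invertible_def by (rule someI_ex)

lemma symmetric_ginv:
  assumes "transpose g = g" and "invertible g"
  shows "ginv g $ i $ j = ginv g $ j $ i"
proof -
  have "transpose (ginv g) = transpose (ginv g) ** (g ** ginv g)"
    using ginv_mult[OF assms(2)] by simp
  also have "\<dots> = transpose (transpose g ** ginv g) ** ginv g"
    by (simp only: matrix_mul_assoc matrix_transpose_mul transpose_transpose)
  also have "\<dots> = ginv g"
    using ginv_mult[OF assms(2)] by (simp add: assms(1))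
  finally have "transpose (ginv g) $ j $ i = ginv g $ j $ i"
    by simp
  then show ?thesis
    by (simp add: transpose_def)
qed

lemma zero_tensor4_mem: "0 \<in> curv_a" "0 \<in> curv_s"
  by (simp_all add: curv_a_def curv_s_def curv_r_def)

lemma pair4_eq_0_if_orthogonal:
  assumes "invertible g"
    and orth: "\<forall>A\<in>curv_a. \<forall>S\<in>curv_s. inner4 g R (\<lambda>x y z w. A x y z w + S x y z w) = 0"
    and "U \<in> curv_a \<or> U \<in> curv_s"
  shows "pair4 R U = 0"
proof -
  have "transform4 g U \<in> curv_a \<or> transform4 g U \<in> curv_s"
    using assms(3) transform4_curv_a transform4_curv_s by blast
  then have "inner4 g R (transform4 g U) = 0"
  proof
    assume "transform4 g U \<in> curv_a"
    from orth[rule_format, OF this zero_tensor4_mem(2)] show ?thesis by simp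
  next
    assume "transform4 g U \<in> curv_s"
    from orth[rule_format, OF zero_tensor4_mem(1) this] show ?thesis by simp
  qed
  moreover have "transform4 (ginv g) (transform4 g U) = U"
    using ginv_mult[OF assms(1)] by (simp add: transform4_matrix_mult transform4_mat_1)
  ultimately show ?thesis
    by (simp add: inner4_eq_pair4_transform4)
qed

definition kron :: "'n \<Rightarrow> 'n \<Rightarrow> real" where
  "kron x p = (if x = p then 1 else 0)"

definition tensor13 :: "real^'n^'n \<Rightarrow> 'n \<Rightarrow> 'n \<Rightarrow> 'n tensor4" where
  "tensor13 M x y = (\<lambda>i j k l. M$i$k * kron x j * kron y l)"

definition tensor34 :: "real^'n^'n \<Rightarrow> 'n \<Rightarrow> 'n \<Rightarrow> 'n tensor4" where
  "tensor34 M x y = (\<lambda>i j k l. M$k$l * kron x i * kron y j)"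

definition probe_s :: "real^'n^'n \<Rightarrow> 'n \<Rightarrow> 'n \<Rightarrow> 'n tensor4" where
  "probe_s M x y = tensor13 M x y + swap34 (tensor13 M x y)
    - swap12 (tensor13 M x y) - swap12 (swap34 (tensor13 M x y))
    - tensor34 M x y + swap12 (tensor34 M x y)"

definition probe_a :: "real^'n^'n \<Rightarrow> 'n \<Rightarrow> 'n \<Rightarrow> 'n tensor4" where
  "probe_a M x y = swap34 (tensor13 M x y + tensor13 M y x)
    + swap12 (tensor13 M x y + tensor13 M y x)
    - (tensor13 M x y + tensor13 M y x) - swap12 (swap34 (tensor13 M x y + tensor13 M y x))"

lemma probe_s_mem:
  assumes "\<And>i j. M$i$j = M$j$i"
  shows "probe_s M x y \<in> curv_s"
  unfolding curv_s_def curv_r_def probe_s_def tensor13_def tensor34_def swap12_def swap34_def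
  by (auto simp: algebra_simps assms[of _ i for i])

lemma probe_a_mem:
  assumes "\<And>i j. M$i$j = M$j$i"
  shows "probe_a M x y \<in> curv_a"
  unfolding curv_a_def curv_r_def probe_a_def tensor13_def swap12_def swap34_def
  by (auto simp: algebra_simps assms[of _ i for i])

lemma pair4_add: "pair4 R (U + V) = pair4 R U + pair4 R V"
  by (simp add: pair4_def distrib_left sum.distrib)

lemma pair4_diff: "pair4 R (U - V) = pair4 R U - pair4 R V"
  by (simp add: pair4_def right_diff_distrib sum_subtractf)

lemma pair4_uminus_left: "pair4 (- R) U = - pair4 R U"
  by (simp add: pair4_def sum_negf)

lemma pair4_swap12: "pair4 R (swap12 U) = pair4 (swap12 R) U"
  unfolding pair4_def swap12_def by (rule sum.swap)

lemma pair4_swap34: "pair4 R (swap34 U) = pair4 (swap34 R) U"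
proof -
  have "(\<Sum>k\<in>UNIV. \<Sum>l\<in>UNIV. R i j k l * U i j l k) = (\<Sum>k\<in>UNIV. \<Sum>l\<in>UNIV. R i j l k * U i j k l)"
    for i j by (rule sum.swap)
  then show ?thesis
    by (simp add: pair4_def swap34_def)
qed

lemma if_zero_mult: "(if P then a else 0) * (b::real) = (if P then a * b else 0)"
  by simp

lemma mult_if_zero: "(b::real) * (if P then a else 0) = (if P then b * a else 0)"
  by simp

lemma sum_if_zero: "(\<Sum>x\<in>A. if P then f x else 0) = (if P then sum f A else 0)"
  by simp

lemmas kron_collapse = kron_def if_zero_mult mult_if_zero sum_if_zero

lemma pair4_tensor13: "pair4 R (tensor13 M x y) = (\<Sum>i\<in>UNIV. \<Sum>k\<in>UNIV. M$i$k * R i x k y)"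
  unfolding pair4_def tensor13_def by (simp add: kron_collapse mult.commute cong: if_cong)

lemma pair4_tensor34: "pair4 R (tensor34 M x y) = (\<Sum>k\<in>UNIV. \<Sum>l\<in>UNIV. M$k$l * R x y k l)"
  unfolding pair4_def tensor34_def by (simp add: kron_collapse mult.commute cong: if_cong)

lemma swap34_uminus: "swap34 (- T) = - swap34 T"
  by (simp add: swap34_def fun_eq_iff)

lemma pair4_tensor13_ginv: "pair4 R (tensor13 (ginv g) x y) = - RicStar g R x y"
  by (simp add: pair4_tensor13 RicStar_def Ric_def star4_def sum_negf)

lemma RicStar_uminus: "RicStar g (- R) x y = - RicStar g R x y"
  by (simp add: RicStar_def Ric_def star4_def sum_negf)

lemma RicStar_swap34: "RicStar g (swap34 R) x y = - Ric g R x y"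
  by (simp add: RicStar_def Ric_def star4_def swap34_def sum_negf)

lemma pair4_tensor34_ginv:
  assumes "R \<in> curv_r"
  shows "pair4 R (tensor34 (ginv g) x y) = Ric g R y x - Ric g R x y"
proof -
  have skew: "R a b c d = - R b a c d" and cyclic: "R a b c d + R b c a d + R c a b d = 0"
    for a b c d using assms unfolding curv_r_def by blast+
  have "R x y k l = R k y x l - R k x y l" for k l
    using cyclic[of x y k l] skew[of y k x l] skew[of k x y l] by linarith
  then show ?thesis
    by (simp add: pair4_tensor34 Ric_def right_diff_distrib sum_subtractf)
qed

lemma pair4_probe_s:
  assumes "R \<in> curv_r"
  shows "pair4 R (probe_s (ginv g) x y) = 4 * Ric g R x y - 2 * Ric g R y x - 2 * RicStar g R x y"
proof -
  from assms have "swap12 R = - R"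
    by (rule curv_r_swap12)
  then show ?thesis
    by (simp add: probe_s_def pair4_add pair4_diff pair4_swap12 pair4_swap34 swap34_uminus
        pair4_uminus_left pair4_tensor13_ginv RicStar_uminus RicStar_swap34 pair4_tensor34_ginv[OF assms])
qed

lemma pair4_probe_a:
  assumes "R \<in> curv_r"
  shows "pair4 R (probe_a (ginv g) x y) =
    2 * (Ric g R x y + Ric g R y x + RicStar g R x y + RicStar g R y x)"
proof -
  from assms have "swap12 R = - R"
    by (rule curv_r_swap12)
  then show ?thesis
    by (simp add: probe_a_def pair4_add pair4_diff pair4_swap12 pair4_swap34 swap34_uminus
        pair4_uminus_left pair4_tensor13_ginv RicStar_uminus RicStar_swap34)
qed

theorem lemma5p3:
  fixes g :: "real^'n^'n" and R :: "('n::finite) tensor4"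
  assumes "CARD('n) \<ge> 3"
    and "nondeg_scalar_product g"
    and "R \<in> curv_r"
    and "\<forall>A\<in>curv_a. \<forall>S\<in>curv_s. inner4 g R (\<lambda>x y z w. A x y z w + S x y z w) = 0"
    and "Ric g R \<noteq> (\<lambda>x y. 0)"
  shows "(\<forall>x y. Ric g R x y = - Ric g R y x) \<and>
         (\<forall>x y. 3 * Ric g R x y = RicStar g R x y)"
proof -
  have sym: "transpose g = g" and inv: "invertible g"
    using assms(2) by (auto simp: nondeg_scalar_product_def)
  have orth: "pair4 R U = 0" if "U \<in> curv_a \<or> U \<in> curv_s" for U
    using pair4_eq_0_if_orthogonal[OF inv assms(4) that] .
  note ginv_sym = symmetric_ginv[OF sym inv]
  have rel_s: "4 * Ric g R x y - 2 * Ric g R y x - 2 * RicStar g R x y = 0" for x y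
    using orth[of "probe_s (ginv g) x y"] probe_s_mem[OF ginv_sym] pair4_probe_s[OF assms(3)]
    by simp
  have rel_a: "Ric g R x y + Ric g R y x + RicStar g R x y + RicStar g R y x = 0" for x y
    using orth[of "probe_a (ginv g) x y"] probe_a_mem[OF ginv_sym] pair4_probe_a[OF assms(3)]
    by simp
  have skew: "Ric g R x y = - Ric g R y x" for x y
    using rel_s[of x y] rel_s[of y x] rel_a[of x y] by linarith
  show ?thesis
  proof (intro conjI allI)
    fix x y
    show "Ric g R x y = - Ric g R y x"
      by (rule skew)
    show "3 * Ric g R x y = RicStar g R x y"
      using rel_s[of x y] skew[of y x] by linarith
  qed
qed

end
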